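(* Let $c,\Gamma,\sigma>0$, $q\ge0$, $\theta\in\mathbb{R}$, and consider $$\dot y=-cy-zy-qy^3+d,\qquad \dot z=\Gamma y^2-\sigma z-\sigma\theta,\qquad x=(y,z)\in\mathbb{R}^2,\ d\in\mathbb{R}$$ (the closed loop of $\dot y=\theta y+u+d$ with $u=-cy-\hat\theta y-qy^3$, $\dot{\hat\theta}=\Gamma y^2-\sigma\hat\theta$, $z=\hat\theta-\theta$). Then for every $x(0)\in\mathbb{R}^2$ and $d\in L^\infty(\mathbb{R}_+;\mathbb{R})$ the solution exists for all $t\ge0$ and satisfies $$|x(t)|\le e^{-\min(c,\sigma)t/2}\sqrt{\max(\Gamma,1/\Gamma)}\,|x(0)|+\sqrt{\frac{\max(\Gamma,1)}{c\min(c,\sigma)}}\,\|d\|_\infty+|\theta|\sqrt{\frac{\sigma}{\min(\Gamma,1)\min(c,\sigma)}}.$$ Moreover, if $\theta>c$ and $d\equiv0$, then $\Big(\pm\sqrt{\frac{\sigma(\theta-c)}{\Gamma+\sigma q}},\ -\frac{\Gamma c+\theta\sigma q}{\Gamma+\sigma q}\Big)$ are equilibrium points of this system. *)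

theory Defs
  imports "HOL-Probability.Probability"
begin

definition Linf_pos :: "(real \<Rightarrow> real) \<Rightarrow> bool" where
  "Linf_pos d \<longleftrightarrow> d \<in> borel_measurable (restrict_space lebesgue {0..})
     \<and> esssup (restrict_space lebesgue {0..}) (\<lambda>t. ereal \<bar>d t\<bar>) < \<infinity>"

definition Linf_norm :: "(real \<Rightarrow> real) \<Rightarrow> real" where
  "Linf_norm d = real_of_ereal (esssup (restrict_space lebesgue {0..}) (\<lambda>t. ereal \<bar>d t\<bar>))"

definition fy :: "real \<Rightarrow> real \<Rightarrow> real \<Rightarrow> real \<Rightarrow> real \<Rightarrow> real" where
  "fy c q y z dv = - c * y - z * y - q * y ^ 3 + dv"

definition fz :: "real \<Rightarrow> real \<Rightarrow> real \<Rightarrow> real \<Rightarrow> real \<Rightarrow> real" where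
  "fz \<Gamma> \<sigma> \<theta> y z = \<Gamma> * y ^ 2 - \<sigma> * z - \<sigma> * \<theta>"

definition is_solution ::
  "real \<Rightarrow> real \<Rightarrow> real \<Rightarrow> real \<Rightarrow> real \<Rightarrow> (real \<Rightarrow> real) \<Rightarrow> (real \<Rightarrow> real) \<Rightarrow> (real \<Rightarrow> real) \<Rightarrow> bool"
where
  "is_solution c \<Gamma> \<sigma> q \<theta> d y z \<longleftrightarrow>
     continuous_on {0..} y \<and> continuous_on {0..} z \<and>
     (\<forall>t\<ge>0. ((\<lambda>s. fy c q (y s) (z s) (d s)) has_integral (y t - y 0)) {0..t}
           \<and> ((\<lambda>s. fz \<Gamma> \<sigma> \<theta> (y s) (z s)) has_integral (z t - z 0)) {0..t})"

end

theory Submission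
  imports Defs
begin

text \<open>Along solutions the Lyapunov function \<open>V = y\<^sup>2/2 + z\<^sup>2/(2\<Gamma>)\<close> satisfies
  \<open>V' + min c \<sigma> \<cdot> V \<le> \<parallel>d\<parallel>\<^sup>2/(2c) + \<sigma>\<theta>\<^sup>2/(2\<Gamma>)\<close>: the cubic term only helps, and
  the cross terms \<open>d y\<close> and \<open>-\<sigma>\<theta>z/\<Gamma>\<close> are absorbed by Young's inequality. Comparison
  with the linear equation and the equivalence of \<open>V\<close> with \<open>|x|\<^sup>2\<close> give the estimate.
  Since \<open>d\<close> is only essentially bounded, solutions are absolutely continuous and \<open>V'\<close> is
  justified by integration by parts. Existence: Picard iteration for a globally Lipschitz
  truncation of the system, whose truncation is never active by the a priori bound.\<close>

lemma absolutely_integrable_continuous_mult_real: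
  fixes k f :: "real \<Rightarrow> real"
  assumes k: "continuous_on {a..b} k" and f: "f absolutely_integrable_on {a..b}"
  shows "(\<lambda>s. k s * f s) absolutely_integrable_on {a..b}"
proof (rule absolutely_integrable_bounded_measurable_product_real[OF _ _ _ f])
  show "k \<in> borel_measurable (lebesgue_on {a..b})"
    by (rule continuous_imp_measurable_on_sets_lebesgue[OF k]) simp
  show "bounded (k ` {a..b})"
    using compact_continuous_image[OF k] compact_imp_bounded by blast
qed simp

lemma integral_eq_primitive_diff:
  fixes f F :: "real \<Rightarrow> real"
  assumes F: "\<And>t. t \<in> {a..b} \<Longrightarrow> (f has_integral (F t - F a)) {a..t}"
    and st: "a \<le> s" "s \<le> t" "t \<le> b"
  shows "integral {s..t} f = F t - F s"
proof -
  have ht: "(f has_integral (F t - F a)) {a..t}" and hs: "(f has_integral (F s - F a)) {a..s}"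
    using F st by auto
  have "integral {a..s} f + integral {s..t} f = integral {a..t} f"
    using Henstock_Kurzweil_Integration.integral_combine[OF st(1,2) has_integral_integrable[OF ht]] .
  then show ?thesis using integral_unique[OF hs] integral_unique[OF ht] by simp
qed

lemma continuous_on_primitive:
  fixes f F :: "real \<Rightarrow> real"
  assumes F: "\<And>t. t \<in> {a..b} \<Longrightarrow> (f has_integral (F t - F a)) {a..t}" and ab: "a \<le> b"
  shows "continuous_on {a..b} F"
proof (rule continuous_on_eq)
  have "f integrable_on {a..b}" using F[of b] ab by (auto intro: has_integral_integrable)
  then show "continuous_on {a..b} (\<lambda>t. F a + integral {a..t} f)"
    by (intro continuous_intros indefinite_integral_continuous_1)
  show "F a + integral {a..t} f = F t" if "t \<in> {a..b}" for t
    using integral_unique[OF F[OF that]] by simp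
qed

definition uniform_grid :: "real \<Rightarrow> real \<Rightarrow> nat \<Rightarrow> nat \<Rightarrow> real" where
  "uniform_grid a b n i = a + real i * (b - a) / real n"

lemma uniform_grid_mono:
  assumes "a \<le> b" "i \<le> j" shows "uniform_grid a b n i \<le> uniform_grid a b n j"
proof -
  have "real i * (b - a) \<le> real j * (b - a)" using assms by (intro mult_right_mono) auto
  then show ?thesis unfolding uniform_grid_def by (simp add: divide_right_mono)
qed

lemma uniform_grid_0 [simp]: "uniform_grid a b n 0 = a"
  by (simp add: uniform_grid_def)

lemma uniform_grid_last [simp]: "n > 0 \<Longrightarrow> uniform_grid a b n n = b"
  by (simp add: uniform_grid_def)

lemma uniform_grid_in:
  assumes "a \<le> b" "i \<le> n" "n > 0" shows "uniform_grid a b n i \<in> {a..b}"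
  using uniform_grid_mono[OF assms(1), of 0 i n] uniform_grid_mono[OF assms(1,2), of n] assms by auto

lemma uniform_grid_step:
  "n > 0 \<Longrightarrow> uniform_grid a b n (Suc i) - uniform_grid a b n i = (b - a) / real n"
  by (simp add: uniform_grid_def field_simps)

lemma sum_integrals_uniform_grid:
  fixes H :: "real \<Rightarrow> 'a::banach"
  assumes H: "H integrable_on {a..b}" and ab: "a \<le> b" and n: "n > 0"
  shows "(\<Sum>i<n. integral {uniform_grid a b n i .. uniform_grid a b n (Suc i)} H) = integral {a..b} H"
proof -
  have "(\<Sum>i<k. integral {uniform_grid a b n i .. uniform_grid a b n (Suc i)} H)
      = integral {a..uniform_grid a b n k} H" if "k \<le> n" for k
    using that
  proof (induction k)
    case (Suc k)
    have "{a..uniform_grid a b n (Suc k)} \<subseteq> {a..b}"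
      using uniform_grid_in[OF ab Suc.prems n] by auto
    then have "integral {a..uniform_grid a b n k} H
        + integral {uniform_grid a b n k .. uniform_grid a b n (Suc k)} H
        = integral {a..uniform_grid a b n (Suc k)} H"
      using uniform_grid_mono[OF ab, of 0 k n] uniform_grid_mono[OF ab, of k "Suc k" n]
      by (intro Henstock_Kurzweil_Integration.integral_combine integrable_on_subinterval[OF H]) auto
    then show ?case using Suc by simp
  qed simp
  from this[of n] n show ?thesis by simp
qed

lemma abs_tag_integral_diff_le:
  fixes f G :: "real \<Rightarrow> real"
  assumes f: "f absolutely_integrable_on {u..v}" and G: "continuous_on {u..v} G"
    and osc: "\<And>s. s \<in> {u..v} \<Longrightarrow> \<bar>G \<tau> - G s\<bar> \<le> e"
  shows "\<bar>G \<tau> * integral {u..v} f - integral {u..v} (\<lambda>s. f s * G s)\<bar>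
    \<le> e * integral {u..v} (\<lambda>s. \<bar>f s\<bar>)"
proof -
  have fG: "(\<lambda>s. f s * G s) absolutely_integrable_on {u..v}"
    using absolutely_integrable_continuous_mult_real[OF G f] by (simp add: mult.commute)
  have fi: "f integrable_on {u..v}" and fGi: "(\<lambda>s. f s * G s) integrable_on {u..v}"
    using f fG by (simp_all add: absolutely_integrable_on_def)
  have "G \<tau> * integral {u..v} f - integral {u..v} (\<lambda>s. f s * G s)
      = integral {u..v} (\<lambda>s. G \<tau> * f s - f s * G s)"
    using integrable_on_mult_right[OF fi] fGi by (simp add: integral_diff)
  also have "\<dots> = integral {u..v} (\<lambda>s. f s * (G \<tau> - G s))"
    by (simp add: algebra_simps)
  also have "\<bar>\<dots>\<bar> \<le> integral {u..v} (\<lambda>s. \<bar>f s\<bar> * e)"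
    unfolding real_norm_def[symmetric]
  proof (rule integral_norm_bound_integral)
    show "(\<lambda>s. f s * (G \<tau> - G s)) integrable_on {u..v}"
      using integrable_diff[OF integrable_on_mult_left[OF fi, of "G \<tau>"] fGi]
      by (simp add: right_diff_distrib)
    show "(\<lambda>s. norm (f s) * e) integrable_on {u..v}"
      using f by (simp add: absolutely_integrable_on_def integrable_on_mult_left)
    show "norm (f s * (G \<tau> - G s)) \<le> norm (f s) * e" if "s \<in> {u..v}" for s
      using osc[OF that] by (simp add: abs_mult mult_left_mono)
  qed
  finally show ?thesis by (simp add: mult.commute)
qed

lemma abs_riemann_stieltjes_sum_le:
  fixes f G :: "real \<Rightarrow> real"
  assumes f: "f absolutely_integrable_on {a..b}" and G: "continuous_on {a..b} G"
    and ab: "a \<le> b" and n: "n > 0"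
    and osc: "\<And>i s. i < n \<Longrightarrow> s \<in> {uniform_grid a b n i .. uniform_grid a b n (Suc i)} \<Longrightarrow>
      \<bar>G (\<tau> i) - G s\<bar> \<le> e"
  shows "\<bar>(\<Sum>i<n. G (\<tau> i) * integral {uniform_grid a b n i .. uniform_grid a b n (Suc i)} f)
    - integral {a..b} (\<lambda>s. f s * G s)\<bar> \<le> e * integral {a..b} (\<lambda>s. \<bar>f s\<bar>)"
proof -
  let ?I = "\<lambda>i. {uniform_grid a b n i .. uniform_grid a b n (Suc i)}"
  have I_sub: "?I i \<subseteq> {a..b}" if "i < n" for i
    using uniform_grid_in[OF ab, of i n] uniform_grid_in[OF ab, of "Suc i" n] that n by auto
  have fG: "(\<lambda>s. f s * G s) integrable_on {a..b}"
    using absolutely_integrable_continuous_mult_real[OF G f]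
    by (simp add: absolutely_integrable_on_def mult.commute)
  have "\<bar>(\<Sum>i<n. G (\<tau> i) * integral (?I i) f) - integral {a..b} (\<lambda>s. f s * G s)\<bar>
      = \<bar>\<Sum>i<n. G (\<tau> i) * integral (?I i) f - integral (?I i) (\<lambda>s. f s * G s)\<bar>"
    by (simp add: sum_integrals_uniform_grid[OF fG ab n, symmetric] sum_subtractf)
  also have "\<dots> \<le> (\<Sum>i<n. e * integral (?I i) (\<lambda>s. \<bar>f s\<bar>))"
  proof (rule order_trans[OF sum_abs sum_mono])
    fix i assume "i \<in> {..<n}"
    then have i: "i < n" by simp
    show "\<bar>G (\<tau> i) * integral (?I i) f - integral (?I i) (\<lambda>s. f s * G s)\<bar>
        \<le> e * integral (?I i) (\<lambda>s. \<bar>f s\<bar>)"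
      using absolutely_integrable_on_subinterval[OF f I_sub[OF i]]
        continuous_on_subset[OF G I_sub[OF i]] osc[OF i]
      by (rule abs_tag_integral_diff_le)
  qed
  also have "\<dots> = e * integral {a..b} (\<lambda>s. \<bar>f s\<bar>)"
    using sum_integrals_uniform_grid[of "\<lambda>s. \<bar>f s\<bar>", OF _ ab n] f
    by (simp add: sum_distrib_left[symmetric] absolutely_integrable_on_def)
  finally show ?thesis .
qed

lemma riemann_stieltjes_sum_approx:
  fixes f G :: "real \<Rightarrow> real"
  assumes f: "f absolutely_integrable_on {a..b}" and G: "continuous_on {a..b} G"
    and ab: "a \<le> b" and e: "e > 0"
  shows "\<exists>N. \<forall>n\<ge>N. \<forall>\<tau>.
      (\<forall>i<n. \<tau> i \<in> {uniform_grid a b n i .. uniform_grid a b n (Suc i)}) \<longrightarrow>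
      \<bar>(\<Sum>i<n. G (\<tau> i) * integral {uniform_grid a b n i .. uniform_grid a b n (Suc i)} f)
        - integral {a..b} (\<lambda>s. f s * G s)\<bar> \<le> e"
proof -
  define A where "A = integral {a..b} (\<lambda>s. \<bar>f s\<bar>)"
  have A0: "A \<ge> 0"
    unfolding A_def by (rule integral_nonneg) (use f in \<open>auto simp: absolutely_integrable_on_def\<close>)
  define e' where "e' = e / (1 + A)"
  have e'0: "e' > 0" and e'A: "e' * A \<le> e"
    using e A0 by (auto simp: e'_def field_simps)
  have "uniformly_continuous_on {a..b} G" using G compact_uniformly_continuous by blast
  then obtain \<delta> where \<delta>: "\<delta> > 0"
    and G\<delta>: "\<And>s s'. s \<in> {a..b} \<Longrightarrow> s' \<in> {a..b} \<Longrightarrow> dist s' s < \<delta> \<Longrightarrow> dist (G s') (G s) < e'"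
    unfolding uniformly_continuous_on_def using e'0 by metis
  define N where "N = nat \<lceil>(b - a) / \<delta>\<rceil> + 1"
  show ?thesis
  proof (intro exI allI impI)
    fix n :: nat and \<tau> :: "nat \<Rightarrow> real"
    assume nN: "N \<le> n" and \<tau>: "\<forall>i<n. \<tau> i \<in> {uniform_grid a b n i .. uniform_grid a b n (Suc i)}"
    have n0: "n > 0" using nN by (simp add: N_def)
    have mesh: "(b - a) / real n < \<delta>"
    proof -
      have "(b - a) / \<delta> < real n" using nN unfolding N_def by linarith
      then show ?thesis using \<delta> n0 by (simp add: field_simps)
    qed
    have "\<bar>G (\<tau> i) - G s\<bar> \<le> e'"
      if i: "i < n" and s: "s \<in> {uniform_grid a b n i .. uniform_grid a b n (Suc i)}" for i s
    proof -
      have "\<bar>s - \<tau> i\<bar> \<le> (b - a) / real n"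
        using s \<tau> i uniform_grid_step[OF n0, of a b i] by auto
      moreover have "s \<in> {a..b}" "\<tau> i \<in> {a..b}"
        using s \<tau> i uniform_grid_in[OF ab, of i n] uniform_grid_in[OF ab, of "Suc i" n] n0 by auto
      ultimately show ?thesis
        using G\<delta>[of s "\<tau> i"] mesh by (simp add: dist_real_def abs_minus_commute)
    qed
    then show "\<bar>(\<Sum>i<n. G (\<tau> i) * integral {uniform_grid a b n i .. uniform_grid a b n (Suc i)} f)
        - integral {a..b} (\<lambda>s. f s * G s)\<bar> \<le> e"
      using abs_riemann_stieltjes_sum_le[OF f G ab n0] e'A by (fastforce simp: A_def)
  qed
qed

lemma product_diff_eq_grid_sum:
  fixes f g F G :: "real \<Rightarrow> real"
  assumes ab: "a \<le> b" and n: "n > 0"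
    and F: "\<And>t. t \<in> {a..b} \<Longrightarrow> (f has_integral (F t - F a)) {a..t}"
    and G: "\<And>t. t \<in> {a..b} \<Longrightarrow> (g has_integral (G t - G a)) {a..t}"
  shows "F b * G b - F a * G a =
    (\<Sum>i<n. G (uniform_grid a b n (Suc i)) * integral {uniform_grid a b n i .. uniform_grid a b n (Suc i)} f)
    + (\<Sum>i<n. F (uniform_grid a b n i) * integral {uniform_grid a b n i .. uniform_grid a b n (Suc i)} g)"
proof -
  let ?t = "uniform_grid a b n"
  have "F b * G b - F a * G a = (\<Sum>i<n. F (?t (Suc i)) * G (?t (Suc i)) - F (?t i) * G (?t i))"
    using sum_lessThan_telescope[of "\<lambda>i. F (?t i) * G (?t i)" n] n by simp
  also have "\<dots> = (\<Sum>i<n. G (?t (Suc i)) * integral {?t i .. ?t (Suc i)} f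
                        + F (?t i) * integral {?t i .. ?t (Suc i)} g)"
  proof (rule sum.cong[OF refl])
    fix i assume "i \<in> {..<n}"
    then have t: "a \<le> ?t i" "?t i \<le> ?t (Suc i)" "?t (Suc i) \<le> b"
      using uniform_grid_in[OF ab, of i n] uniform_grid_in[OF ab, of "Suc i" n] n
        uniform_grid_mono[OF ab, of i "Suc i" n] by auto
    show "F (?t (Suc i)) * G (?t (Suc i)) - F (?t i) * G (?t i)
        = G (?t (Suc i)) * integral {?t i .. ?t (Suc i)} f + F (?t i) * integral {?t i .. ?t (Suc i)} g"
      using integral_eq_primitive_diff[OF F t] integral_eq_primitive_diff[OF G t]
      by (simp only:) (simp add: algebra_simps)
  qed
  finally show ?thesis by (simp add: sum.distrib)
qed

text \<open>The library's \<open>integration_by_parts\<close> needs derivatives outside a countable set;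
  primitives of absolutely integrable functions are only differentiable almost everywhere,
  so here the product rule is obtained from Riemann--Stieltjes sums.\<close>
lemma has_integral_product_of_primitives:
  fixes f g F G :: "real \<Rightarrow> real"
  assumes ab: "a \<le> b"
    and f: "f absolutely_integrable_on {a..b}" and g: "g absolutely_integrable_on {a..b}"
    and F: "\<And>t. t \<in> {a..b} \<Longrightarrow> (f has_integral (F t - F a)) {a..t}"
    and G: "\<And>t. t \<in> {a..b} \<Longrightarrow> (g has_integral (G t - G a)) {a..t}"
  shows "((\<lambda>s. f s * G s + F s * g s) has_integral (F b * G b - F a * G a)) {a..b}"
proof -
  have Fc: "continuous_on {a..b} F" by (rule continuous_on_primitive[OF F ab])
  have Gc: "continuous_on {a..b} G" by (rule continuous_on_primitive[OF G ab])
  define P where "P = integral {a..b} (\<lambda>s. f s * G s) + integral {a..b} (\<lambda>s. g s * F s)"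
  have close: "\<bar>F b * G b - F a * G a - P\<bar> \<le> e" if e: "e > 0" for e
  proof -
    have e2: "e / 2 > 0" using e by simp
    obtain N1 where N1: "\<And>n \<tau>. n \<ge> N1 \<Longrightarrow>
        \<forall>i<n. \<tau> i \<in> {uniform_grid a b n i .. uniform_grid a b n (Suc i)} \<Longrightarrow>
        \<bar>(\<Sum>i<n. G (\<tau> i) * integral {uniform_grid a b n i .. uniform_grid a b n (Suc i)} f)
          - integral {a..b} (\<lambda>s. f s * G s)\<bar> \<le> e / 2"
      using riemann_stieltjes_sum_approx[OF f Gc ab e2] by blast
    obtain N2 where N2: "\<And>n \<tau>. n \<ge> N2 \<Longrightarrow>
        \<forall>i<n. \<tau> i \<in> {uniform_grid a b n i .. uniform_grid a b n (Suc i)} \<Longrightarrow>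
        \<bar>(\<Sum>i<n. F (\<tau> i) * integral {uniform_grid a b n i .. uniform_grid a b n (Suc i)} g)
          - integral {a..b} (\<lambda>s. g s * F s)\<bar> \<le> e / 2"
      using riemann_stieltjes_sum_approx[OF g Fc ab e2] by blast
    define n where "n = max 1 (max N1 N2)"
    have n: "n > 0" "N1 \<le> n" "N2 \<le> n" by (auto simp: n_def)
    have step: "uniform_grid a b n i \<le> uniform_grid a b n (Suc i)" for i
      using uniform_grid_mono[OF ab, of i "Suc i"] by simp
    have "\<bar>(\<Sum>i<n. G (uniform_grid a b n (Suc i))
              * integral {uniform_grid a b n i .. uniform_grid a b n (Suc i)} f)
          - integral {a..b} (\<lambda>s. f s * G s)\<bar> \<le> e / 2"
      using step by (intro N1[OF n(2)]) auto
    moreover have "\<bar>(\<Sum>i<n. F (uniform_grid a b n i)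
              * integral {uniform_grid a b n i .. uniform_grid a b n (Suc i)} g)
          - integral {a..b} (\<lambda>s. g s * F s)\<bar> \<le> e / 2"
      using step by (intro N2[OF n(3)]) auto
    ultimately show ?thesis
      using product_diff_eq_grid_sum[OF ab n(1) F G] unfolding P_def abs_le_iff by linarith
  qed
  have "F b * G b - F a * G a = P"
    using close field_le_epsilon[of "\<bar>F b * G b - F a * G a - P\<bar>" 0] by fastforce
  moreover have "((\<lambda>s. f s * G s + g s * F s) has_integral P) {a..b}"
    unfolding P_def
    using absolutely_integrable_continuous_mult_real[OF Gc f]
      absolutely_integrable_continuous_mult_real[OF Fc g]
    by (intro has_integral_add integrable_integral) (simp_all add: absolutely_integrable_on_def mult.commute)
  ultimately show ?thesis by (simp add: mult.commute)
qed

lemma has_integral_square_of_primitive: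
  fixes g y :: "real \<Rightarrow> real"
  assumes ab: "a \<le> b" and g: "g absolutely_integrable_on {a..b}"
    and y: "\<And>t. t \<in> {a..b} \<Longrightarrow> (g has_integral (y t - y a)) {a..t}"
  shows "((\<lambda>s. 2 * (g s * y s)) has_integral ((y b)\<^sup>2 - (y a)\<^sup>2)) {a..b}"
  using has_integral_product_of_primitives[OF ab g g y y]
  by (simp add: power2_eq_square algebra_simps)

lemma has_integral_exp_derivative:
  fixes m t :: real
  assumes "t \<ge> 0"
  shows "((\<lambda>s. m * exp (m * s)) has_integral (exp (m * t) - 1)) {0..t}"
proof -
  have "((\<lambda>s. m * exp (m * s)) has_integral (exp (m * t) - exp (m * 0))) {0..t}"
  proof (rule fundamental_theorem_of_calculus[OF assms])
    fix x :: real
    show "((\<lambda>s. exp (m * s)) has_vector_derivative m * exp (m * x)) (at x within {0..t})"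
      by (auto intro!: derivative_eq_intros simp: has_real_derivative_iff_has_vector_derivative[symmetric])
  qed
  then show ?thesis by simp
qed

text \<open>Comparison principle for \<open>V' + m V \<le> K\<close>: integrate \<open>(V e\<^sup>m\<^sup>t)'\<close>.\<close>
lemma linear_differential_inequality_bound:
  fixes v V :: "real \<Rightarrow> real"
  assumes m: "m > 0" and T: "T \<ge> 0" and K: "K \<ge> 0"
    and v: "v absolutely_integrable_on {0..T}"
    and V: "\<And>t. t \<in> {0..T} \<Longrightarrow> (v has_integral (V t - V 0)) {0..t}"
    and dissipation: "\<And>s. s \<in> {0..T} \<Longrightarrow> v s + m * V s \<le> K"
  shows "V T \<le> exp (- m * T) * V 0 + K / m"
proof -
  have weighted: "((\<lambda>s. v s * exp (m * s) + V s * (m * exp (m * s))) has_integral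
      (V T * exp (m * T) - V 0)) {0..T}"
  proof -
    have e: "(\<lambda>s. m * exp (m * s)) absolutely_integrable_on {0..T}"
      by (intro absolutely_integrable_continuous_real continuous_intros)
    have E: "((\<lambda>s. m * exp (m * s)) has_integral (exp (m * t) - exp (m * 0))) {0..t}"
      if "t \<in> {0..T}" for t
      using has_integral_exp_derivative[of t m] that by simp
    show ?thesis
      using has_integral_product_of_primitives[OF T v e V E] by simp
  qed
  have bound: "((\<lambda>s. K / m * (m * exp (m * s))) has_integral (K / m * (exp (m * T) - 1))) {0..T}"
    by (rule has_integral_mult_right[OF has_integral_exp_derivative[OF T]])
  have "v s * exp (m * s) + V s * (m * exp (m * s)) \<le> K / m * (m * exp (m * s))"
    if "s \<in> {0..T}" for s
    using mult_right_mono[OF dissipation[OF that], of "exp (m * s)"] m by (simp add: algebra_simps)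
  then have "V T * exp (m * T) - V 0 \<le> K / m * (exp (m * T) - 1)"
    using has_integral_le[OF weighted bound] by blast
  then have "V T \<le> (V 0 + K / m * (exp (m * T) - 1)) / exp (m * T)"
    by (simp add: pos_le_divide_eq)
  also have "\<dots> = exp (- m * T) * V 0 + K / m * (1 - exp (- m * T))"
    using m by (simp add: exp_minus field_simps)
  also have "\<dots> \<le> exp (- m * T) * V 0 + K / m"
    using K m mult_left_le[of "1 - exp (- m * T)" "K / m"] by simp
  finally show ?thesis .
qed

definition lyapunov :: "real \<Rightarrow> real \<Rightarrow> real \<Rightarrow> real" where
  "lyapunov \<Gamma> y z = y\<^sup>2 / 2 + z\<^sup>2 / (2 * \<Gamma>)"

lemma lyapunov_dissipation:
  fixes c \<Gamma> \<sigma> q \<theta> m M Y Z D :: real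
  assumes "c > 0" "\<Gamma> > 0" "\<sigma> > 0" "q \<ge> 0" "m \<le> c" "m \<le> \<sigma>" "\<bar>D\<bar> \<le> M"
  shows "fy c q Y Z D * Y + fz \<Gamma> \<sigma> \<theta> Y Z * Z / \<Gamma> + m * lyapunov \<Gamma> Y Z
     \<le> M\<^sup>2 / (2 * c) + \<sigma> * \<theta>\<^sup>2 / (2 * \<Gamma>)"
proof -
  have expand: "fy c q Y Z D * Y + fz \<Gamma> \<sigma> \<theta> Y Z * Z / \<Gamma> + m * lyapunov \<Gamma> Y Z
     = - c * Y\<^sup>2 - q * (Y\<^sup>2)\<^sup>2 + D * Y - \<sigma> * Z\<^sup>2 / \<Gamma> - \<sigma> * \<theta> * Z / \<Gamma>
       + m * Y\<^sup>2 / 2 + m * Z\<^sup>2 / (2 * \<Gamma>)"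
    using assms by (simp add: fy_def fz_def lyapunov_def field_simps power2_eq_square power3_eq_cube)
  have "2 * c * (D * Y) \<le> c\<^sup>2 * Y\<^sup>2 + D\<^sup>2"
    using sum_squares_bound[of "c * Y" D] by (simp add: power_mult_distrib algebra_simps)
  then have DY: "D * Y \<le> c * Y\<^sup>2 / 2 + D\<^sup>2 / (2 * c)"
    using assms(1) by (simp add: field_simps power2_eq_square)
  have DM: "D\<^sup>2 / (2 * c) \<le> M\<^sup>2 / (2 * c)"
    using assms(1) power_mono[OF assms(7) abs_ge_zero, of 2] by (intro divide_right_mono) auto
  have "- (2 * (\<sigma> * \<theta> * Z)) \<le> \<sigma> * Z\<^sup>2 + \<sigma> * \<theta>\<^sup>2"
    using mult_left_mono[OF zero_le_power2[of "Z + \<theta>"], of \<sigma>] assms(3)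
    by (simp add: power2_eq_square algebra_simps)
  then have Z\<theta>: "- (\<sigma> * \<theta> * Z / \<Gamma>) \<le> \<sigma> * Z\<^sup>2 / (2 * \<Gamma>) + \<sigma> * \<theta>\<^sup>2 / (2 * \<Gamma>)"
    using assms(2) by (simp add: field_simps)
  have "m * Y\<^sup>2 / 2 \<le> c * Y\<^sup>2 / 2" "m * Z\<^sup>2 / (2 * \<Gamma>) \<le> \<sigma> * Z\<^sup>2 / (2 * \<Gamma>)"
    using assms by (simp_all add: divide_right_mono mult_right_mono)
  moreover have "0 \<le> q * (Y\<^sup>2)\<^sup>2" using assms by simp
  moreover have "\<sigma> * Z\<^sup>2 / \<Gamma> = \<sigma> * Z\<^sup>2 / (2 * \<Gamma>) + \<sigma> * Z\<^sup>2 / (2 * \<Gamma>)" by (simp add: field_simps)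
  ultimately show ?thesis unfolding expand using DY DM Z\<theta> by linarith
qed

lemma sum_sq_le_of_lyapunov_bound:
  fixes \<Gamma> E K Y Z Y0 Z0 :: real
  assumes \<Gamma>: "\<Gamma> > 0" and E: "E \<ge> 0"
    and V: "lyapunov \<Gamma> Y Z \<le> E * lyapunov \<Gamma> Y0 Z0 + K"
  shows "Y\<^sup>2 + Z\<^sup>2 \<le> max \<Gamma> (1 / \<Gamma>) * E * (Y0\<^sup>2 + Z0\<^sup>2) + 2 * max \<Gamma> 1 * K"
proof -
  define G where "G = max \<Gamma> 1"
  have G: "G \<ge> 1" "G \<ge> \<Gamma>" by (auto simp: G_def)
  have initial: "G * (Y0\<^sup>2 + Z0\<^sup>2 / \<Gamma>) \<le> max \<Gamma> (1 / \<Gamma>) * (Y0\<^sup>2 + Z0\<^sup>2)"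
  proof (cases "\<Gamma> \<ge> 1")
    case True
    then have "G = \<Gamma>" "max \<Gamma> (1 / \<Gamma>) = \<Gamma>" "Z0\<^sup>2 \<le> \<Gamma> * Z0\<^sup>2"
      using order_trans[of "1 / \<Gamma>" 1 \<Gamma>] mult_right_mono[OF True, of "Z0\<^sup>2"] by (auto simp: G_def)
    then show ?thesis using \<Gamma> by (simp add: distrib_left)
  next
    case False
    then have "G = 1" "max \<Gamma> (1 / \<Gamma>) = 1 / \<Gamma>" "Y0\<^sup>2 \<le> Y0\<^sup>2 / \<Gamma>"
      using \<Gamma> order_trans[of \<Gamma> 1 "1 / \<Gamma>"] mult_right_mono[of \<Gamma> 1 "Y0\<^sup>2"]
      by (auto simp: G_def le_divide_eq mult.commute)
    then show ?thesis by (simp add: add_divide_distrib)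
  qed
  have "Z\<^sup>2 = \<Gamma> * (Z\<^sup>2 / \<Gamma>)" using \<Gamma> by simp
  also have "\<dots> \<le> G * (Z\<^sup>2 / \<Gamma>)" using G \<Gamma> by (intro mult_right_mono) auto
  finally have "Y\<^sup>2 + Z\<^sup>2 \<le> G * Y\<^sup>2 + G * (Z\<^sup>2 / \<Gamma>)"
    using G mult_right_mono[OF G(1) zero_le_power2[of Y]] by linarith
  also have "\<dots> = 2 * G * lyapunov \<Gamma> Y Z" using \<Gamma> by (simp add: lyapunov_def field_simps)
  also have "\<dots> \<le> 2 * G * (E * lyapunov \<Gamma> Y0 Z0 + K)" using V G by simp
  also have "\<dots> = E * (G * (Y0\<^sup>2 + Z0\<^sup>2 / \<Gamma>)) + 2 * G * K"
    using \<Gamma> by (simp add: lyapunov_def field_simps)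
  also have "\<dots> \<le> E * (max \<Gamma> (1 / \<Gamma>) * (Y0\<^sup>2 + Z0\<^sup>2)) + 2 * G * K"
    using mult_left_mono[OF initial E] by simp
  finally show ?thesis by (simp add: G_def mult_ac)
qed

definition solves_upto ::
  "real \<Rightarrow> real \<Rightarrow> real \<Rightarrow> real \<Rightarrow> real \<Rightarrow> (real \<Rightarrow> real) \<Rightarrow> (real \<Rightarrow> real) \<Rightarrow> (real \<Rightarrow> real) \<Rightarrow> real \<Rightarrow> bool"
where
  "solves_upto c \<Gamma> \<sigma> q \<theta> d y z T \<longleftrightarrow>
     (\<forall>t\<in>{0..T}. ((\<lambda>s. fy c q (y s) (z s) (d s)) has_integral (y t - y 0)) {0..t}
               \<and> ((\<lambda>s. fz \<Gamma> \<sigma> \<theta> (y s) (z s)) has_integral (z t - z 0)) {0..t})"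

lemma is_solution_iff_solves_upto:
  "is_solution c \<Gamma> \<sigma> q \<theta> d y z \<longleftrightarrow>
     continuous_on {0..} y \<and> continuous_on {0..} z \<and> (\<forall>T\<ge>0. solves_upto c \<Gamma> \<sigma> q \<theta> d y z T)"
  by (auto simp: is_solution_def solves_upto_def)

lemma solves_upto_energy_identity:
  fixes c \<Gamma> \<sigma> q \<theta> T :: real and d y z :: "real \<Rightarrow> real"
  assumes \<Gamma>: "\<Gamma> > 0" and T: "T \<ge> 0" and d: "d absolutely_integrable_on {0..T}"
    and sol: "solves_upto c \<Gamma> \<sigma> q \<theta> d y z T"
  defines "v \<equiv> \<lambda>s. fy c q (y s) (z s) (d s) * y s + fz \<Gamma> \<sigma> \<theta> (y s) (z s) * z s / \<Gamma>"
  shows "v absolutely_integrable_on {0..T}"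
    and "\<And>t. t \<in> {0..T} \<Longrightarrow>
      (v has_integral (lyapunov \<Gamma> (y t) (z t) - lyapunov \<Gamma> (y 0) (z 0))) {0..t}"
proof -
  define g where "g = (\<lambda>s. fy c q (y s) (z s) (d s))"
  define h where "h = (\<lambda>s. fz \<Gamma> \<sigma> \<theta> (y s) (z s))"
  have y: "(g has_integral (y t - y 0)) {0..t}" and z: "(h has_integral (z t - z 0)) {0..t}"
    if "t \<in> {0..T}" for t
    using sol that by (auto simp: solves_upto_def g_def h_def)
  have yc: "continuous_on {0..T} y" by (rule continuous_on_primitive[OF y T])
  have zc: "continuous_on {0..T} z" by (rule continuous_on_primitive[OF z T])
  have g_int: "g absolutely_integrable_on {0..T}"
  proof -
    have "(\<lambda>s. (- c * y s - z s * y s - q * y s ^ 3) + d s) absolutely_integrable_on {0..T}"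
      by (intro set_integral_add(1) d absolutely_integrable_continuous_real continuous_intros yc zc)
    then show ?thesis by (simp add: g_def fy_def)
  qed
  have h_int: "h absolutely_integrable_on {0..T}"
    unfolding h_def fz_def by (intro absolutely_integrable_continuous_real continuous_intros yc zc)
  have "(\<lambda>s. y s * g s + (z s / \<Gamma>) * h s) absolutely_integrable_on {0..T}"
    by (intro set_integral_add(1) absolutely_integrable_continuous_mult_real g_int h_int yc
        continuous_intros zc) (use \<Gamma> in auto)
  then show "v absolutely_integrable_on {0..T}" by (simp add: v_def g_def h_def mult.commute)
  fix t assume t: "t \<in> {0..T}"
  have sub: "{0..t} \<subseteq> {0..T}" using t by auto
  have "((\<lambda>s. 2 * (g s * y s)) has_integral ((y t)\<^sup>2 - (y 0)\<^sup>2)) {0..t}"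
    using t y sub by (intro has_integral_square_of_primitive absolutely_integrable_on_subinterval[OF g_int]) auto
  moreover have "((\<lambda>s. 2 * (h s * z s)) has_integral ((z t)\<^sup>2 - (z 0)\<^sup>2)) {0..t}"
    using t z sub by (intro has_integral_square_of_primitive absolutely_integrable_on_subinterval[OF h_int]) auto
  ultimately have "((\<lambda>s. 1 / 2 * (2 * (g s * y s)) + 1 / (2 * \<Gamma>) * (2 * (h s * z s))) has_integral
      (1 / 2 * ((y t)\<^sup>2 - (y 0)\<^sup>2) + 1 / (2 * \<Gamma>) * ((z t)\<^sup>2 - (z 0)\<^sup>2))) {0..t}"
    by (intro has_integral_add has_integral_mult_right)
  moreover have "(\<lambda>s. 1 / 2 * (2 * (g s * y s)) + 1 / (2 * \<Gamma>) * (2 * (h s * z s))) = v"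
    using \<Gamma> by (auto simp: v_def g_def h_def)
  moreover have "1 / 2 * ((y t)\<^sup>2 - (y 0)\<^sup>2) + 1 / (2 * \<Gamma>) * ((z t)\<^sup>2 - (z 0)\<^sup>2)
      = lyapunov \<Gamma> (y t) (z t) - lyapunov \<Gamma> (y 0) (z 0)"
    using \<Gamma> by (simp add: lyapunov_def field_simps)
  ultimately show "(v has_integral (lyapunov \<Gamma> (y t) (z t) - lyapunov \<Gamma> (y 0) (z 0))) {0..t}"
    by simp
qed

lemma solves_upto_sq_bound:
  fixes c \<Gamma> \<sigma> q \<theta> M T :: real and d y z :: "real \<Rightarrow> real"
  assumes pos: "c > 0" "\<Gamma> > 0" "\<sigma> > 0" "q \<ge> 0" and T: "T \<ge> 0"
    and dM: "\<And>s. s \<in> {0..T} \<Longrightarrow> \<bar>d s\<bar> \<le> M" and d: "d absolutely_integrable_on {0..T}"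
    and sol: "solves_upto c \<Gamma> \<sigma> q \<theta> d y z T"
  shows "(y T)\<^sup>2 + (z T)\<^sup>2 \<le> max \<Gamma> (1 / \<Gamma>) * exp (- min c \<sigma> * T) * ((y 0)\<^sup>2 + (z 0)\<^sup>2)
           + max \<Gamma> 1 * M\<^sup>2 / (c * min c \<sigma>) + max \<Gamma> 1 * \<sigma> * \<theta>\<^sup>2 / (\<Gamma> * min c \<sigma>)"
proof -
  define m where "m = min c \<sigma>"
  have m: "m > 0" "m \<le> c" "m \<le> \<sigma>" using pos by (auto simp: m_def)
  define K where "K = M\<^sup>2 / (2 * c) + \<sigma> * \<theta>\<^sup>2 / (2 * \<Gamma>)"
  note energy = solves_upto_energy_identity[OF pos(2) T d sol]
  have "lyapunov \<Gamma> (y T) (z T) \<le> exp (- m * T) * lyapunov \<Gamma> (y 0) (z 0) + K / m"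
  proof (rule linear_differential_inequality_bound[OF m(1) T _ energy])
    show "K \<ge> 0" using pos by (simp add: K_def)
    show "fy c q (y s) (z s) (d s) * y s + fz \<Gamma> \<sigma> \<theta> (y s) (z s) * z s / \<Gamma>
        + m * lyapunov \<Gamma> (y s) (z s) \<le> K" if "s \<in> {0..T}" for s
      using lyapunov_dissipation[OF pos m(2,3) dM[OF that], of "y s" "z s" \<theta>]
      by (simp add: K_def)
  qed
  then have "(y T)\<^sup>2 + (z T)\<^sup>2 \<le> max \<Gamma> (1 / \<Gamma>) * exp (- m * T) * ((y 0)\<^sup>2 + (z 0)\<^sup>2)
      + 2 * max \<Gamma> 1 * (K / m)"
    by (rule sum_sq_le_of_lyapunov_bound[OF pos(2) exp_ge_zero])
  also have "2 * max \<Gamma> 1 * (K / m) = max \<Gamma> 1 * M\<^sup>2 / (c * m) + max \<Gamma> 1 * \<sigma> * \<theta>\<^sup>2 / (\<Gamma> * m)"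
    using pos m by (simp add: K_def field_simps)
  finally show ?thesis by (simp add: m_def add.assoc)
qed

lemma sqrt_le_of_le_sum_squares:
  fixes x A B C :: real
  assumes "x \<le> A\<^sup>2 + B\<^sup>2 + C\<^sup>2" "A \<ge> 0" "B \<ge> 0" "C \<ge> 0"
  shows "sqrt x \<le> A + B + C"
proof -
  have "0 \<le> A * B" "0 \<le> A * C" "0 \<le> B * C" using assms by simp_all
  then have "x \<le> (A + B + C)\<^sup>2"
    using assms(1) by (simp add: power2_eq_square algebra_simps)
  then show ?thesis
    using assms real_sqrt_le_mono[of x "(A + B + C)\<^sup>2"] by simp
qed

lemma solves_upto_norm_bound:
  fixes c \<Gamma> \<sigma> q \<theta> M T :: real and d y z :: "real \<Rightarrow> real"
  assumes pos: "c > 0" "\<Gamma> > 0" "\<sigma> > 0" "q \<ge> 0" and T: "T \<ge> 0" and M: "M \<ge> 0"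
    and dM: "\<And>s. s \<in> {0..T} \<Longrightarrow> \<bar>d s\<bar> \<le> M" and d: "d absolutely_integrable_on {0..T}"
    and sol: "solves_upto c \<Gamma> \<sigma> q \<theta> d y z T"
  shows "sqrt ((y T)\<^sup>2 + (z T)\<^sup>2) \<le>
           exp (- min c \<sigma> * T / 2) * sqrt (max \<Gamma> (1 / \<Gamma>)) * sqrt ((y 0)\<^sup>2 + (z 0)\<^sup>2)
           + sqrt (max \<Gamma> 1 / (c * min c \<sigma>)) * M + \<bar>\<theta>\<bar> * sqrt (\<sigma> / (min \<Gamma> 1 * min c \<sigma>))"
proof (rule sqrt_le_of_le_sum_squares)
  define m where "m = min c \<sigma>"
  have m: "m > 0" using pos by (simp add: m_def)
  have "(exp (- m * T / 2))\<^sup>2 = exp (- m * T)"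
    by (simp add: power2_eq_square exp_add[symmetric])
  moreover have "max \<Gamma> 1 * \<sigma> * \<theta>\<^sup>2 / (\<Gamma> * m) = \<theta>\<^sup>2 * (\<sigma> / (min \<Gamma> 1 * m))"
    using pos by (auto simp: max_def min_def field_simps)
  ultimately show "(y T)\<^sup>2 + (z T)\<^sup>2 \<le>
      (exp (- min c \<sigma> * T / 2) * sqrt (max \<Gamma> (1 / \<Gamma>)) * sqrt ((y 0)\<^sup>2 + (z 0)\<^sup>2))\<^sup>2
      + (sqrt (max \<Gamma> 1 / (c * min c \<sigma>)) * M)\<^sup>2 + (\<bar>\<theta>\<bar> * sqrt (\<sigma> / (min \<Gamma> 1 * min c \<sigma>)))\<^sup>2"
    using solves_upto_sq_bound[OF pos T dM d sol] pos m
    by (simp add: m_def power_mult_distrib le_max_iff_disj mult_ac)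
qed (use pos M in auto)

lemma continuous_on_atLeast_of_intervals:
  fixes g :: "real \<Rightarrow> 'a::topological_space"
  assumes "\<And>T. T \<ge> 0 \<Longrightarrow> continuous_on {0..T} g"
  shows "continuous_on {0..} g"
  unfolding continuous_on_eq_continuous_within
proof
  fix x :: real assume x: "x \<in> {0..}"
  have "at x within {0..} = at x within {0..x+1}"
    by (rule at_within_nhd[where S="{x - 1 <..< x + 1}"]) auto
  moreover have "continuous (at x within {0..x+1}) g"
    using assms[of "x+1"] x by (auto simp: continuous_on_eq_continuous_within)
  ultimately show "continuous (at x within {0..}) g" by (simp add: continuous_within)
qed

lemma has_integral_power_0:
  fixes t :: real
  assumes "t \<ge> 0"
  shows "((\<lambda>s. s ^ n) has_integral (t ^ Suc n / real (Suc n))) {0..t}"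
proof -
  have "((\<lambda>s. s ^ n) has_integral (t ^ Suc n / real (Suc n) - 0 ^ Suc n / real (Suc n))) {0..t}"
  proof (rule fundamental_theorem_of_calculus[OF assms])
    fix x :: real
    have "((\<lambda>s. s ^ Suc n / real (Suc n)) has_real_derivative
        (real (Suc n) * x ^ n / real (Suc n))) (at x within {0..t})"
      using DERIV_cdivide[OF DERIV_pow[of "Suc n" x "{0..t}"], of "real (Suc n)"] by simp
    then show "((\<lambda>s. s ^ Suc n / real (Suc n)) has_vector_derivative x ^ n) (at x within {0..t})"
      by (simp add: has_real_derivative_iff_has_vector_derivative)
  qed
  then show ?thesis by simp
qed

primrec picard_iterate :: "(real \<Rightarrow> 'a::euclidean_space \<Rightarrow> 'a) \<Rightarrow> 'a \<Rightarrow> nat \<Rightarrow> real \<Rightarrow> 'a" where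
  "picard_iterate F x0 0 = (\<lambda>t. x0)"
| "picard_iterate F x0 (Suc k) = (\<lambda>t. x0 + integral {0..t} (\<lambda>s. F s (picard_iterate F x0 k s)))"

declare picard_iterate.simps(2) [simp del]

definition picard_limit :: "(real \<Rightarrow> 'a::euclidean_space \<Rightarrow> 'a) \<Rightarrow> 'a \<Rightarrow> real \<Rightarrow> 'a" where
  "picard_limit F x0 t = x0 + (\<Sum>i. picard_iterate F x0 (Suc i) t - picard_iterate F x0 i t)"

context
  fixes F :: "real \<Rightarrow> 'a::euclidean_space \<Rightarrow> 'a" and L :: real
  assumes cont: "\<And>x. continuous_on {0..} x \<Longrightarrow> continuous_on {0..} (\<lambda>s. F s (x s))"
    and lip: "\<And>s p p'. s \<ge> 0 \<Longrightarrow> norm (F s p - F s p') \<le> L * norm (p - p')"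
    and L: "L \<ge> 0"
begin

lemma integrable_on_compose_continuous:
  "continuous_on {0..} x \<Longrightarrow> (\<lambda>s. F s (x s)) integrable_on {0..t}"
  by (rule integrable_continuous_interval) (use continuous_on_subset[OF cont] in auto)

lemma picard_iterate_continuous: "continuous_on {0..} (picard_iterate F x0 k)"
proof (induction k)
  case (Suc k)
  have "continuous_on {0..} (\<lambda>t. integral {0..t} (\<lambda>s. F s (picard_iterate F x0 k s)))"
    by (intro continuous_on_atLeast_of_intervals indefinite_integral_continuous_1
        integrable_on_compose_continuous Suc)
  then show ?case by (auto simp: picard_iterate.simps intro!: continuous_intros)
qed simp

lemma picard_iterate_at_0: "picard_iterate F x0 k 0 = x0"
  by (cases k) (simp_all add: picard_iterate.simps)

lemma picard_increment_bound:
  assumes T: "T \<ge> 0"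
  obtains B where "B \<ge> 0" "\<And>k t. t \<in> {0..T} \<Longrightarrow>
    norm (picard_iterate F x0 (Suc k) t - picard_iterate F x0 k t) \<le> B * L ^ k * t ^ Suc k / fact (Suc k)"
proof -
  let ?X = "picard_iterate F x0"
  have int: "(\<lambda>s. F s (?X k s)) integrable_on {0..t}" for k t
    by (rule integrable_on_compose_continuous[OF picard_iterate_continuous])
  have "compact ((\<lambda>s. F s x0) ` {0..T})"
    by (rule compact_continuous_image) (use continuous_on_subset[OF cont[of "\<lambda>s. x0"]] in auto)
  then obtain B where B: "B > 0" "\<And>s. s \<in> {0..T} \<Longrightarrow> norm (F s x0) \<le> B"
    using compact_imp_bounded bounded_pos by (metis imageI)
  have "norm (?X (Suc k) t - ?X k t) \<le> B * L ^ k * t ^ Suc k / fact (Suc k)" if "t \<in> {0..T}" for k t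
    using that
  proof (induction k arbitrary: t)
    case 0
    have "norm (integral {0..t} (\<lambda>s. F s x0)) \<le> integral {0..t} (\<lambda>s. B)"
      by (rule integral_norm_bound_integral) (use int[of 0 t] 0 B in auto)
    then show ?case using 0 by (simp add: picard_iterate.simps mult.commute)
  next
    case (Suc k)
    have "?X (Suc (Suc k)) t - ?X (Suc k) t
        = integral {0..t} (\<lambda>s. F s (?X (Suc k) s)) - integral {0..t} (\<lambda>s. F s (?X k s))"
      by (simp only: picard_iterate.simps) simp
    also have "\<dots> = integral {0..t} (\<lambda>s. F s (?X (Suc k) s) - F s (?X k s))"
      by (rule integral_diff[OF int int, symmetric])
    also have "norm \<dots> \<le> integral {0..t} (\<lambda>s. (L * (B * L ^ k / fact (Suc k))) * s ^ Suc k)"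
    proof (rule integral_norm_bound_integral)
      show "(\<lambda>s. F s (?X (Suc k) s) - F s (?X k s)) integrable_on {0..t}"
        by (intro integrable_diff int)
      show "(\<lambda>s. (L * (B * L ^ k / fact (Suc k))) * s ^ Suc k) integrable_on {0..t}"
        by (intro integrable_continuous_interval continuous_intros)
      fix s assume s: "s \<in> {0..t}"
      have "norm (F s (?X (Suc k) s) - F s (?X k s)) \<le> L * norm (?X (Suc k) s - ?X k s)"
        using lip s by auto
      also have "\<dots> \<le> L * (B * L ^ k * s ^ Suc k / fact (Suc k))"
        using Suc.IH[of s] s Suc.prems L by (intro mult_left_mono) auto
      finally show "norm (F s (?X (Suc k) s) - F s (?X k s)) \<le> (L * (B * L ^ k / fact (Suc k))) * s ^ Suc k"
        by (simp add: field_simps)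
    qed
    also have "\<dots> = (L * (B * L ^ k / fact (Suc k))) * (t ^ Suc (Suc k) / real (Suc (Suc k)))"
      using integral_unique[OF has_integral_mult_right[OF has_integral_power_0[of t "Suc k"]]] Suc.prems
      by simp
    also have "\<dots> = B * L ^ Suc k * t ^ Suc (Suc k) / fact (Suc (Suc k))"
      by (simp add: field_simps)
    finally show ?case .
  qed
  then show ?thesis using B that by (meson less_imp_le)
qed

lemma picard_uniform_limit:
  assumes T: "T \<ge> 0"
  shows "uniform_limit {0..T} (picard_iterate F x0) (picard_limit F x0) sequentially"
proof -
  let ?X = "picard_iterate F x0"
  obtain B where B: "B \<ge> 0"
    "\<And>k t. t \<in> {0..T} \<Longrightarrow> norm (?X (Suc k) t - ?X k t) \<le> B * L ^ k * t ^ Suc k / fact (Suc k)"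
    using picard_increment_bound[OF T] by blast
  define M where "M k = B * L ^ k * T ^ Suc k / fact (Suc k)" for k
  have bound: "norm (?X (Suc k) t - ?X k t) \<le> M k" if t: "t \<in> {0..T}" for k t
  proof -
    have "t ^ Suc k \<le> T ^ Suc k" using t by (intro power_mono) auto
    then have "B * L ^ k * t ^ Suc k / fact (Suc k) \<le> M k"
      unfolding M_def using B L by (intro divide_right_mono mult_left_mono) auto
    then show ?thesis using B(2)[OF t, of k] by linarith
  qed
  have summable: "summable M"
  proof (rule summable_comparison_test')
    show "summable (\<lambda>k. (B * T) * (inverse (fact k) * (L * T) ^ k))"
      by (intro summable_mult summable_exp)
    fix k :: nat
    have "M k = (B * T) * ((L * T) ^ k / fact (Suc k))"
      by (simp add: M_def power_mult_distrib field_simps)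
    also have "\<dots> \<le> (B * T) * (inverse (fact k) * (L * T) ^ k)"
    proof (intro mult_left_mono)
      have "(L * T) ^ k / fact (Suc k) \<le> (L * T) ^ k / fact k"
        using L T by (intro divide_left_mono) (auto simp: fact_mono)
      then show "(L * T) ^ k / fact (Suc k) \<le> inverse (fact k) * (L * T) ^ k"
        by (simp add: field_simps)
    qed (use B T in auto)
    finally show "norm (M k) \<le> (B * T) * (inverse (fact k) * (L * T) ^ k)"
      using B L T by (simp add: M_def)
  qed
  have "uniform_limit {0..T} (\<lambda>n t. \<Sum>i<n. ?X (Suc i) t - ?X i t)
      (\<lambda>t. \<Sum>i. ?X (Suc i) t - ?X i t) sequentially"
    using bound summable by (rule Weierstrass_m_test)
  moreover have "(\<Sum>i<n. ?X (Suc i) t - ?X i t) = ?X n t - x0" for n t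
    using sum_lessThan_telescope[of "\<lambda>i. ?X i t" n] by simp
  ultimately show ?thesis
    unfolding uniform_limit_iff by (simp add: picard_limit_def dist_norm algebra_simps)
qed

lemma picard_existence:
  "\<exists>x. continuous_on {0..} x \<and> x 0 = x0 \<and> (\<forall>t\<ge>0. ((\<lambda>s. F s (x s)) has_integral (x t - x0)) {0..t})"
proof (intro exI conjI allI impI)
  let ?X = "picard_iterate F x0" and ?x = "picard_limit F x0"
  show "continuous_on {0..} ?x"
    by (intro continuous_on_atLeast_of_intervals uniform_limit_theorem[OF _ picard_uniform_limit])
       (auto intro!: always_eventually continuous_on_subset[OF picard_iterate_continuous])
  show "?x 0 = x0" by (simp add: picard_limit_def picard_iterate_at_0)
  fix t :: real assume t: "t \<ge> 0"
  have u: "uniform_limit {0..t} ?X ?x sequentially" by (rule picard_uniform_limit[OF t])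
  have "uniform_limit {0..t} (\<lambda>n s. F s (?X n s)) (\<lambda>s. F s (?x s)) sequentially"
  proof (rule uniform_limitI)
    fix e :: real assume e: "e > 0"
    have e': "e / (L + 1) > 0" using e L by simp
    from uniform_limitD[OF u e']
    show "\<forall>\<^sub>F n in sequentially. \<forall>s\<in>{0..t}. dist (F s (?X n s)) (F s (?x s)) < e"
    proof eventually_elim
      case (elim n)
      show ?case
      proof
        fix s assume s: "s \<in> {0..t}"
        have "dist (F s (?X n s)) (F s (?x s)) \<le> L * dist (?X n s) (?x s)"
          using lip[of s] s by (simp add: dist_norm)
        also have "\<dots> \<le> L * (e / (L + 1))"
          using elim s L by (intro mult_left_mono) (auto intro: less_imp_le)
        also have "\<dots> < e" using e L by (simp add: field_simps)
        finally show "dist (F s (?X n s)) (F s (?x s)) < e" .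
      qed
    qed
  qed
  then obtain I J where IJ: "\<And>n. ((\<lambda>s. F s (?X n s)) has_integral I n) {0..t}"
      "((\<lambda>s. F s (?x s)) has_integral J) {0..t}" "I \<longlonglongrightarrow> J"
    by (rule uniform_limit_integral)
       (use continuous_on_subset[OF cont[OF picard_iterate_continuous]] in auto)
  have "?X (Suc n) t = x0 + I n" for n
    using IJ(1)[of n] by (simp add: picard_iterate.simps integral_unique)
  then have "(\<lambda>n. ?X (Suc n) t) \<longlonglongrightarrow> x0 + J"
    using tendsto_add[OF tendsto_const IJ(3)] by simp
  moreover have "(\<lambda>n. ?X (Suc n) t) \<longlonglongrightarrow> ?x t"
    using tendsto_uniform_limitI[OF u, of t] t LIMSEQ_Suc by auto
  ultimately have "?x t = x0 + J" using LIMSEQ_unique by blast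
  then show "((\<lambda>s. F s (?x s)) has_integral (?x t - x0)) {0..t}" using IJ(2) by simp
qed

end

definition clip :: "real \<Rightarrow> real \<Rightarrow> real" where
  "clip R v = max (- R) (min R v)"

lemma abs_clip_le: "R \<ge> 0 \<Longrightarrow> \<bar>clip R v\<bar> \<le> R"
  by (auto simp: clip_def)

lemma abs_clip_diff_le: "\<bar>clip R v - clip R w\<bar> \<le> \<bar>v - w\<bar>"
  by (auto simp: clip_def)

lemma clip_eq_self: "\<bar>v\<bar> \<le> R \<Longrightarrow> clip R v = v"
  by (auto simp: clip_def)

lemma continuous_on_clip [continuous_intros]:
  "continuous_on S f \<Longrightarrow> continuous_on S (\<lambda>x. clip R (f x))"
  unfolding clip_def by (intro continuous_intros)

lemma abs_cube_diff_le:
  fixes Y Y' R :: real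
  assumes "\<bar>Y\<bar> \<le> R" "\<bar>Y'\<bar> \<le> R"
  shows "\<bar>Y ^ 3 - Y' ^ 3\<bar> \<le> 3 * R\<^sup>2 * \<bar>Y - Y'\<bar>"
proof -
  have "\<bar>Y\<^sup>2 + Y * Y' + Y'\<^sup>2\<bar> \<le> \<bar>Y\<bar>\<^sup>2 + \<bar>Y\<bar> * \<bar>Y'\<bar> + \<bar>Y'\<bar>\<^sup>2"
    using abs_triangle_ineq[of "Y\<^sup>2 + Y * Y'" "Y'\<^sup>2"] abs_triangle_ineq[of "Y\<^sup>2" "Y * Y'"]
    by (simp add: abs_mult)
  also have "\<dots> \<le> R\<^sup>2 + R * R + R\<^sup>2"
    using assms by (intro add_mono power_mono mult_mono) auto
  finally have "\<bar>Y\<^sup>2 + Y * Y' + Y'\<^sup>2\<bar> \<le> 3 * R\<^sup>2" by (simp add: power2_eq_square)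
  moreover have "Y ^ 3 - Y' ^ 3 = (Y - Y') * (Y\<^sup>2 + Y * Y' + Y'\<^sup>2)"
    by (simp add: power2_eq_square power3_eq_cube algebra_simps)
  ultimately show ?thesis
    by (simp add: abs_mult mult_left_mono mult.commute)
qed

lemma fy_lipschitz_on_box:
  assumes "c \<ge> 0" "q \<ge> 0" "\<bar>Y\<bar> \<le> R" "\<bar>Y'\<bar> \<le> R" "\<bar>Z\<bar> \<le> R" "\<bar>Z'\<bar> \<le> R"
    and "\<bar>Y - Y'\<bar> \<le> n" "\<bar>Z - Z'\<bar> \<le> n"
  shows "\<bar>fy c q Y Z 0 - fy c q Y' Z' 0\<bar> \<le> (c + 2 * R + 3 * q * R\<^sup>2) * n"
proof -
  have "fy c q Y Z 0 - fy c q Y' Z' 0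
      = - (c * (Y - Y')) - (Z' * (Y - Y') + Y * (Z - Z')) - q * (Y ^ 3 - Y' ^ 3)"
    by (simp add: fy_def algebra_simps)
  moreover have "\<bar>c * (Y - Y')\<bar> \<le> c * n" "\<bar>Z' * (Y - Y')\<bar> \<le> R * n" "\<bar>Y * (Z - Z')\<bar> \<le> R * n"
    using assms by (auto simp: abs_mult intro: mult_mono mult_left_mono)
  moreover have "\<bar>q * (Y ^ 3 - Y' ^ 3)\<bar> \<le> q * (3 * R\<^sup>2 * n)"
    using assms abs_cube_diff_le[OF assms(3,4)]
    by (auto simp: abs_mult intro!: mult_left_mono order_trans[OF _ mult_left_mono[of _ n]])
  ultimately show ?thesis by (simp add: algebra_simps)
qed

lemma fz_lipschitz_on_box:
  assumes "\<Gamma> \<ge> 0" "\<sigma> \<ge> 0" "\<bar>Y\<bar> \<le> R" "\<bar>Y'\<bar> \<le> R"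
    and "\<bar>Y - Y'\<bar> \<le> n" "\<bar>Z - Z'\<bar> \<le> n"
  shows "\<bar>fz \<Gamma> \<sigma> \<theta> Y Z - fz \<Gamma> \<sigma> \<theta> Y' Z'\<bar> \<le> (2 * \<Gamma> * R + \<sigma>) * n"
proof -
  have "fz \<Gamma> \<sigma> \<theta> Y Z - fz \<Gamma> \<sigma> \<theta> Y' Z' = \<Gamma> * ((Y + Y') * (Y - Y')) - \<sigma> * (Z - Z')"
    by (simp add: fz_def algebra_simps power2_eq_square)
  moreover have "\<bar>(Y + Y') * (Y - Y')\<bar> \<le> 2 * R * n"
    using assms by (auto simp: abs_mult intro!: mult_mono)
  then have "\<bar>\<Gamma> * ((Y + Y') * (Y - Y'))\<bar> \<le> \<Gamma> * (2 * R * n)"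
    using assms by (simp add: abs_mult mult_left_mono)
  moreover have "\<bar>\<sigma> * (Z - Z')\<bar> \<le> \<sigma> * n" using assms by (simp add: abs_mult mult_left_mono)
  ultimately show ?thesis by (simp add: algebra_simps)
qed

text \<open>The state is \<open>(u, z)\<close> with \<open>y = u + D\<close>, where \<open>D\<close> is a primitive of the disturbance;
  this removes the merely measurable \<open>d\<close> from the vector field, and clipping both components
  to \<open>[-R, R]\<close> makes it globally Lipschitz.\<close>
definition truncated_field ::
  "real \<Rightarrow> real \<Rightarrow> real \<Rightarrow> real \<Rightarrow> real \<Rightarrow> real \<Rightarrow> (real \<Rightarrow> real) \<Rightarrow> real \<Rightarrow> real \<times> real \<Rightarrow> real \<times> real"
where
  "truncated_field c \<Gamma> \<sigma> q \<theta> R D s p =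
     (let Y = clip R (fst p + D s); Z = clip R (snd p) in (fy c q Y Z 0, fz \<Gamma> \<sigma> \<theta> Y Z))"

lemma truncated_field_lipschitz:
  assumes "c \<ge> 0" "\<Gamma> \<ge> 0" "\<sigma> \<ge> 0" "q \<ge> 0" "R \<ge> 0"
  shows "norm (truncated_field c \<Gamma> \<sigma> q \<theta> R D s p - truncated_field c \<Gamma> \<sigma> q \<theta> R D s p')
     \<le> (c + 2 * R + 3 * q * R\<^sup>2 + 2 * \<Gamma> * R + \<sigma>) * norm (p - p')"
proof -
  define Y Y' Z Z' where "Y = clip R (fst p + D s)" "Y' = clip R (fst p' + D s)"
    "Z = clip R (snd p)" "Z' = clip R (snd p')"
  have box: "\<bar>Y\<bar> \<le> R" "\<bar>Y'\<bar> \<le> R" "\<bar>Z\<bar> \<le> R" "\<bar>Z'\<bar> \<le> R"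
    using abs_clip_le assms by (auto simp: Y_Y'_Z_Z'_def)
  have "\<bar>Y - Y'\<bar> \<le> \<bar>fst p - fst p'\<bar>" "\<bar>Z - Z'\<bar> \<le> \<bar>snd p - snd p'\<bar>"
    using abs_clip_diff_le[of R "fst p + D s" "fst p' + D s"] abs_clip_diff_le[of R "snd p" "snd p'"]
    by (simp_all add: Y_Y'_Z_Z'_def)
  moreover have "p - p' = (fst p - fst p', snd p - snd p')" by (simp add: prod_eq_iff)
  then have "\<bar>fst p - fst p'\<bar> \<le> norm (p - p')" "\<bar>snd p - snd p'\<bar> \<le> norm (p - p')"
    using norm_fst_le[of "fst p - fst p'" "snd p - snd p'"]
      norm_snd_le[of "snd p - snd p'" "fst p - fst p'"]
    by simp_all
  ultimately have diff: "\<bar>Y - Y'\<bar> \<le> norm (p - p')" "\<bar>Z - Z'\<bar> \<le> norm (p - p')" by linarith+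
  have "norm (truncated_field c \<Gamma> \<sigma> q \<theta> R D s p - truncated_field c \<Gamma> \<sigma> q \<theta> R D s p')
      \<le> \<bar>fy c q Y Z 0 - fy c q Y' Z' 0\<bar> + \<bar>fz \<Gamma> \<sigma> \<theta> Y Z - fz \<Gamma> \<sigma> \<theta> Y' Z'\<bar>"
  proof -
    have "truncated_field c \<Gamma> \<sigma> q \<theta> R D s p - truncated_field c \<Gamma> \<sigma> q \<theta> R D s p'
        = (fy c q Y Z 0 - fy c q Y' Z' 0, fz \<Gamma> \<sigma> \<theta> Y Z - fz \<Gamma> \<sigma> \<theta> Y' Z')"
      by (simp add: truncated_field_def Y_Y'_Z_Z'_def Let_def)
    then show ?thesis
      using norm_Pair_le[of "fy c q Y Z 0 - fy c q Y' Z' 0" "fz \<Gamma> \<sigma> \<theta> Y Z - fz \<Gamma> \<sigma> \<theta> Y' Z'"]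
      by simp
  qed
  also have "\<dots> \<le> (c + 2 * R + 3 * q * R\<^sup>2) * norm (p - p') + (2 * \<Gamma> * R + \<sigma>) * norm (p - p')"
    using fy_lipschitz_on_box[OF assms(1,4) box diff] fz_lipschitz_on_box[OF assms(2,3) box(1,2) diff]
    by (rule add_mono)
  finally show ?thesis by (simp add: algebra_simps)
qed

lemma solves_upto_0: "solves_upto c \<Gamma> \<sigma> q \<theta> d y z 0"
  by (auto simp: solves_upto_def)

text \<open>Argue at the first time \<open>\<phi>\<close> reaches \<open>R\<close>.\<close>
lemma continuous_bootstrap:
  fixes \<phi> :: "real \<Rightarrow> real"
  assumes cont: "continuous_on {0..} \<phi>" and start: "\<phi> 0 < R" and BR: "B < R"
    and step: "\<And>t. t \<ge> 0 \<Longrightarrow> (\<forall>s\<in>{0..t}. \<phi> s \<le> R) \<Longrightarrow> \<phi> t \<le> B"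
    and t: "t \<ge> 0"
  shows "\<phi> t \<le> B"
proof (rule ccontr)
  assume "\<not> \<phi> t \<le> B"
  then obtain s0 where "s0 \<in> {0..t}" "\<phi> s0 > R" using step[OF t] by force
  define E where "E = {s \<in> {0..t}. \<phi> s \<ge> R}"
  have "E \<noteq> {}" using \<open>s0 \<in> {0..t}\<close> \<open>\<phi> s0 > R\<close> by (force simp: E_def)
  have "closed E"
    unfolding E_def
    using continuous_closed_preimage[OF continuous_on_subset[OF cont, of "{0..t}"] closed_atLeastAtMost, of "{R..}"]
    by (auto simp: vimage_def Int_def)
  moreover have "bdd_below E" by (rule bdd_belowI[of _ 0]) (auto simp: E_def)
  ultimately have "Inf E \<in> E" using \<open>E \<noteq> {}\<close> closed_contains_Inf by blast
  define \<tau> where "\<tau> = Inf E"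
  have \<tau>: "\<phi> \<tau> \<ge> R" "0 \<le> \<tau>" "\<tau> \<le> t" using \<open>Inf E \<in> E\<close> by (auto simp: \<tau>_def E_def)
  have below: "\<phi> s \<le> B" if "0 \<le> s" "s < \<tau>" for s
  proof -
    have "\<phi> s' < R" if "0 \<le> s'" "s' \<le> s" for s'
    proof (rule ccontr)
      assume "\<not> \<phi> s' < R"
      then have "s' \<in> E" using that \<open>s < \<tau>\<close> \<tau> by (auto simp: E_def)
      then have "\<tau> \<le> s'" unfolding \<tau>_def by (rule cInf_lower[OF _ \<open>bdd_below E\<close>])
      then show False using that \<open>s < \<tau>\<close> by simp
    qed
    then show ?thesis using step[of s] that by force
  qed
  have "\<tau> > 0" using \<tau> start by (cases "\<tau> = 0") auto
  have "\<exists>\<delta>>0. \<forall>s\<in>{0..}. dist s \<tau> < \<delta> \<longrightarrow> dist (\<phi> s) (\<phi> \<tau>) < R - B"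
    using cont \<tau>(2) BR unfolding continuous_on_iff by simp
  then obtain \<delta> where \<delta>: "\<delta> > 0" "\<And>s. s \<in> {0..} \<Longrightarrow> dist s \<tau> < \<delta> \<Longrightarrow> dist (\<phi> s) (\<phi> \<tau>) < R - B"
    by blast
  define s where "s = max 0 (\<tau> - \<delta> / 2)"
  have s: "0 \<le> s" "s < \<tau>" "dist s \<tau> < \<delta>"
    using \<delta> \<open>\<tau> > 0\<close> by (auto simp: s_def dist_real_def)
  have "\<phi> \<tau> < \<phi> s + (R - B)" using \<delta>(2)[of s] s by (auto simp: dist_real_def)
  then show False using below[OF s(1,2)] \<tau> by simp
qed

lemma Linf_norm_essential_bound:
  assumes "Linf_pos d"
  shows "Linf_norm d \<ge> 0" and "negligible {s. 0 \<le> s \<and> Linf_norm d < \<bar>d s\<bar>}"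
proof -
  let ?M = "lebesgue_on {0::real..}"
  define E where "E = esssup ?M (\<lambda>t. ereal \<bar>d t\<bar>)"
  have "E < \<infinity>" using assms by (simp add: Linf_pos_def E_def)
  have "AE x in ?M. ereal \<bar>d x\<bar> \<le> E" unfolding E_def by (rule esssup_AE)
  then have "AE x in lebesgue. x \<in> {0..} \<longrightarrow> ereal \<bar>d x\<bar> \<le> E"
    by (subst (asm) AE_restrict_space_iff) auto
  then obtain N where N: "{x \<in> space lebesgue. \<not> (x \<in> {0..} \<longrightarrow> ereal \<bar>d x\<bar> \<le> E)} \<subseteq> N"
    "emeasure lebesgue N = 0" "N \<in> sets lebesgue"
    by (rule AE_E)
  define S where "S = {s::real. 0 \<le> s \<and> \<not> ereal \<bar>d s\<bar> \<le> E}"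
  have "negligible N" using N by (simp add: negligible_iff_null_sets null_sets_def)
  then have "negligible S" by (rule negligible_subset) (use N(1) in \<open>auto simp: S_def\<close>)
  moreover have "\<not> negligible {0..1::real}" using negligible_interval(1)[of "0::real" 1] by simp
  ultimately have "\<not> {0..1::real} \<subseteq> S" using negligible_subset by blast
  then obtain s0 where "s0 \<in> {0..1::real}" "s0 \<notin> S" by blast
  then have "ereal \<bar>d s0\<bar> \<le> E" by (auto simp: S_def)
  then obtain r where r: "E = ereal r" using \<open>E < \<infinity>\<close> by (cases E) auto
  have "Linf_norm d = r" by (simp add: Linf_norm_def E_def[symmetric] r)
  then show "Linf_norm d \<ge> 0" using \<open>ereal \<bar>d s0\<bar> \<le> E\<close> r by auto
  have "{s. 0 \<le> s \<and> Linf_norm d < \<bar>d s\<bar>} = S"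
    by (auto simp: S_def \<open>Linf_norm d = r\<close> r not_le)
  with \<open>negligible S\<close> show "negligible {s. 0 \<le> s \<and> Linf_norm d < \<bar>d s\<bar>}" by simp
qed

lemma absolutely_integrable_on_truncation:
  fixes d :: "real \<Rightarrow> real"
  assumes d: "d \<in> borel_measurable (lebesgue_on {0..})"
  shows "(\<lambda>s. if \<bar>d s\<bar> \<le> M then d s else 0) absolutely_integrable_on {0..t}"
proof (cases "t \<ge> 0")
  case True
  have "d \<in> borel_measurable (lebesgue_on {0..t})" by (rule measurable_restrict_mono[OF d]) auto
  then have "(\<lambda>s. if \<bar>d s\<bar> \<le> M then d s else 0) \<in> borel_measurable (lebesgue_on {0..t})"
    by measurable
  moreover have "bounded ((\<lambda>s. if \<bar>d s\<bar> \<le> M then d s else 0) ` {0..t})"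
    unfolding bounded_iff by (rule exI[of _ "\<bar>M\<bar>"]) auto
  moreover have "(\<lambda>s. 1::real) absolutely_integrable_on {0..t}"
    by (intro absolutely_integrable_continuous_real continuous_intros)
  ultimately show ?thesis
    using absolutely_integrable_bounded_measurable_product_real[of _ "{0..t}" "\<lambda>s. 1"] by simp
qed simp

lemma is_solution_cong_negligible:
  assumes "negligible N" and "\<And>s. s \<ge> 0 \<Longrightarrow> s \<notin> N \<Longrightarrow> d' s = d s"
  shows "is_solution c \<Gamma> \<sigma> q \<theta> d' y z \<longleftrightarrow> is_solution c \<Gamma> \<sigma> q \<theta> d y z"
proof -
  have "((\<lambda>s. fy c q (y s) (z s) (d' s)) has_integral I) {0..t}
    \<longleftrightarrow> ((\<lambda>s. fy c q (y s) (z s) (d s)) has_integral I) {0..t}" for I t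
    using assms by (intro has_integral_spike_eq[OF assms(1)]) auto
  then show ?thesis by (simp add: is_solution_def)
qed

lemma truncated_solution_solves_upto:
  fixes x :: "real \<Rightarrow> real \<times> real" and d D :: "real \<Rightarrow> real"
  assumes x: "\<And>t. t \<ge> 0 \<Longrightarrow>
      ((\<lambda>s. truncated_field c \<Gamma> \<sigma> q \<theta> R D s (x s)) has_integral (x t - x 0)) {0..t}"
    and D: "\<And>t. t \<ge> 0 \<Longrightarrow> (d has_integral D t) {0..t}" and D0: "D 0 = 0"
    and small: "\<And>s. s \<in> {0..T} \<Longrightarrow> \<bar>fst (x s) + D s\<bar> \<le> R \<and> \<bar>snd (x s)\<bar> \<le> R"
  shows "solves_upto c \<Gamma> \<sigma> q \<theta> d (\<lambda>s. fst (x s) + D s) (\<lambda>s. snd (x s)) T"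
  unfolding solves_upto_def
proof (intro ballI conjI)
  fix t assume t: "t \<in> {0..T}"
  let ?F = "\<lambda>s. truncated_field c \<Gamma> \<sigma> q \<theta> R D s (x s)"
  have field: "?F s = (fy c q (fst (x s) + D s) (snd (x s)) 0, fz \<Gamma> \<sigma> \<theta> (fst (x s) + D s) (snd (x s)))"
    if "s \<in> {0..t}" for s
    using small[of s] that t by (simp add: truncated_field_def clip_eq_self Let_def)
  have "((\<lambda>s. fst (?F s) + d s) has_integral (fst (x t) - fst (x 0) + D t)) {0..t}"
    using has_integral_linear[OF x bounded_linear_fst, of t] D[of t] t
    by (auto simp: o_def intro: has_integral_add)
  then have "((\<lambda>s. fst (?F s) + d s) has_integral (fst (x t) + D t - (fst (x 0) + D 0))) {0..t}"
    by (rule has_integral_eq_rhs) (simp add: D0)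
  then show "((\<lambda>s. fy c q (fst (x s) + D s) (snd (x s)) (d s)) has_integral
      (fst (x t) + D t - (fst (x 0) + D 0))) {0..t}"
    by (rule has_integral_eq[rotated]) (simp add: field fy_def)
  have "((\<lambda>s. snd (?F s)) has_integral (snd (x t) - snd (x 0))) {0..t}"
    using has_integral_linear[OF x bounded_linear_snd, of t] t by (auto simp: o_def)
  then show "((\<lambda>s. fz \<Gamma> \<sigma> \<theta> (fst (x s) + D s) (snd (x s))) has_integral (snd (x t) - snd (x 0))) {0..t}"
    by (rule has_integral_eq[rotated]) (simp add: field)
qed

lemma solves_upto_max_abs_le:
  fixes c \<Gamma> \<sigma> q \<theta> M T :: real and d y z :: "real \<Rightarrow> real"
  assumes pos: "c > 0" "\<Gamma> > 0" "\<sigma> > 0" "q \<ge> 0" and T: "T \<ge> 0" and M: "M \<ge> 0"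
    and dM: "\<And>s. s \<in> {0..T} \<Longrightarrow> \<bar>d s\<bar> \<le> M" and d: "d absolutely_integrable_on {0..T}"
    and sol: "solves_upto c \<Gamma> \<sigma> q \<theta> d y z T"
  shows "max \<bar>y T\<bar> \<bar>z T\<bar> \<le> sqrt (max \<Gamma> (1 / \<Gamma>)) * sqrt ((y 0)\<^sup>2 + (z 0)\<^sup>2)
           + sqrt (max \<Gamma> 1 / (c * min c \<sigma>)) * M + \<bar>\<theta>\<bar> * sqrt (\<sigma> / (min \<Gamma> 1 * min c \<sigma>))"
proof -
  have "max \<bar>y T\<bar> \<bar>z T\<bar> \<le> sqrt ((y T)\<^sup>2 + (z T)\<^sup>2)"
    using real_sqrt_le_mono[of "(y T)\<^sup>2" "(y T)\<^sup>2 + (z T)\<^sup>2"]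
      real_sqrt_le_mono[of "(z T)\<^sup>2" "(y T)\<^sup>2 + (z T)\<^sup>2"] by simp
  also have "\<dots> \<le> exp (- min c \<sigma> * T / 2) * (sqrt (max \<Gamma> (1 / \<Gamma>)) * sqrt ((y 0)\<^sup>2 + (z 0)\<^sup>2))
      + sqrt (max \<Gamma> 1 / (c * min c \<sigma>)) * M + \<bar>\<theta>\<bar> * sqrt (\<sigma> / (min \<Gamma> 1 * min c \<sigma>))"
    using solves_upto_norm_bound[OF pos T M dM d sol] by (simp add: mult.assoc)
  also have "\<dots> \<le> sqrt (max \<Gamma> (1 / \<Gamma>)) * sqrt ((y 0)\<^sup>2 + (z 0)\<^sup>2)
      + sqrt (max \<Gamma> 1 / (c * min c \<sigma>)) * M + \<bar>\<theta>\<bar> * sqrt (\<sigma> / (min \<Gamma> 1 * min c \<sigma>))"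
    using pos T by (intro add_right_mono mult_left_le_one_le) (auto simp: le_max_iff_disj)
  finally show ?thesis .
qed

lemma truncated_system_solution:
  assumes pos: "c > 0" "\<Gamma> > 0" "\<sigma> > 0" "q \<ge> 0" and R: "R \<ge> 0"
    and D: "continuous_on {0..} D"
  shows "\<exists>x. continuous_on {0..} x \<and> x 0 = x0 \<and> (\<forall>t\<ge>0.
    ((\<lambda>s. truncated_field c \<Gamma> \<sigma> q \<theta> R D s (x s)) has_integral (x t - x0)) {0..t})"
proof (rule picard_existence)
  show "continuous_on {0..} (\<lambda>s. truncated_field c \<Gamma> \<sigma> q \<theta> R D s (x s))"
    if "continuous_on {0..} x" for x
    unfolding truncated_field_def fy_def fz_def Let_def by (intro continuous_intros that D)
  show "norm (truncated_field c \<Gamma> \<sigma> q \<theta> R D s p - truncated_field c \<Gamma> \<sigma> q \<theta> R D s p')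
      \<le> (c + 2 * R + 3 * q * R\<^sup>2 + 2 * \<Gamma> * R + \<sigma>) * norm (p - p')" for s p p'
    using pos R by (intro truncated_field_lipschitz) auto
  show "c + 2 * R + 3 * q * R\<^sup>2 + 2 * \<Gamma> * R + \<sigma> \<ge> 0"
    using pos R by simp
qed

lemma solution_exists:
  fixes c \<Gamma> \<sigma> q \<theta> M :: real and d :: "real \<Rightarrow> real"
  assumes pos: "c > 0" "\<Gamma> > 0" "\<sigma> > 0" "q \<ge> 0" and M: "M \<ge> 0"
    and dM: "\<And>s. \<bar>d s\<bar> \<le> M" and d: "\<And>t. d absolutely_integrable_on {0..t}"
  shows "\<exists>y z. y 0 = y0 \<and> z 0 = z0 \<and> is_solution c \<Gamma> \<sigma> q \<theta> d y z"
proof -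
  define B where "B = sqrt (max \<Gamma> (1 / \<Gamma>)) * sqrt (y0\<^sup>2 + z0\<^sup>2)
    + sqrt (max \<Gamma> 1 / (c * min c \<sigma>)) * M + \<bar>\<theta>\<bar> * sqrt (\<sigma> / (min \<Gamma> 1 * min c \<sigma>))"
  define R where "R = B + 1"
  have "R \<ge> 0" using pos M by (simp add: R_def B_def le_max_iff_disj add_nonneg_nonneg)
  define D where "D t = integral {0..t} d" for t
  have D: "(d has_integral D t) {0..t}" for t
    using d[of t] by (simp add: D_def absolutely_integrable_on_def integrable_integral)
  have D_cont: "continuous_on {0..} D"
    unfolding D_def using d
    by (intro continuous_on_atLeast_of_intervals indefinite_integral_continuous_1)
       (simp add: absolutely_integrable_on_def)
  obtain x where x_cont: "continuous_on {0..} x" and x0: "x 0 = (y0, z0)"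
    and x: "\<And>t. t \<ge> 0 \<Longrightarrow>
      ((\<lambda>s. truncated_field c \<Gamma> \<sigma> q \<theta> R D s (x s)) has_integral (x t - (y0, z0))) {0..t}"
    using truncated_system_solution[OF pos \<open>R \<ge> 0\<close> D_cont] by blast
  define y where "y s = fst (x s) + D s" for s
  define z where "z s = snd (x s)" for s
  have y0: "y 0 = y0" and z0: "z 0 = z0" using x0 by (simp_all add: y_def z_def D_def)
  have a_priori: "max \<bar>y t\<bar> \<bar>z t\<bar> \<le> B" if "t \<ge> 0" "solves_upto c \<Gamma> \<sigma> q \<theta> d y z t" for t
    using solves_upto_max_abs_le[OF pos that(1) M dM d[of t] that(2)] by (simp add: B_def y0 z0)
  have truncated: "solves_upto c \<Gamma> \<sigma> q \<theta> d y z T"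
    if "\<And>s. s \<in> {0..T} \<Longrightarrow> max \<bar>y s\<bar> \<bar>z s\<bar> \<le> R" for T
    using truncated_solution_solves_upto[of c \<Gamma> \<sigma> q \<theta> R D x d T] x x0 D that
    by (simp add: y_def[abs_def] z_def[abs_def] D_def)
  have bounded: "max \<bar>y t\<bar> \<bar>z t\<bar> \<le> B" if "t \<ge> 0" for t
  proof (rule continuous_bootstrap[of "\<lambda>s. max \<bar>y s\<bar> \<bar>z s\<bar>" R])
    show "continuous_on {0..} (\<lambda>s. max \<bar>y s\<bar> \<bar>z s\<bar>)"
      unfolding y_def z_def by (intro continuous_intros x_cont D_cont)
    show "max \<bar>y 0\<bar> \<bar>z 0\<bar> < R"
      using a_priori[OF _ solves_upto_0] by (simp add: R_def)
    show "max \<bar>y t\<bar> \<bar>z t\<bar> \<le> B" if "t \<ge> 0" "\<forall>s\<in>{0..t}. max \<bar>y s\<bar> \<bar>z s\<bar> \<le> R" for t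
      using a_priori[OF that(1) truncated] that(2) by blast
  qed (simp_all add: R_def that)
  have "is_solution c \<Gamma> \<sigma> q \<theta> d y z"
    unfolding is_solution_iff_solves_upto
  proof (intro conjI allI impI truncated)
    show "continuous_on {0..} y" "continuous_on {0..} z"
      unfolding y_def z_def by (intro continuous_intros x_cont D_cont)+
    fix T s :: real assume "s \<in> {0..T}"
    then show "max \<bar>y s\<bar> \<bar>z s\<bar> \<le> R" using bounded[of s] by (simp add: R_def)
  qed
  then show ?thesis using y0 z0 by blast
qed

lemma equilibria:
  fixes c \<Gamma> \<sigma> q \<theta> ys :: real
  assumes "c > 0" "\<Gamma> > 0" "\<sigma> > 0" "q \<ge> 0" "\<theta> > c"
    and ys: "ys\<^sup>2 = \<sigma> * (\<theta> - c) / (\<Gamma> + \<sigma> * q)"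
  defines "zs \<equiv> - (\<Gamma> * c + \<theta> * \<sigma> * q) / (\<Gamma> + \<sigma> * q)"
  shows "fy c q ys zs 0 = 0" and "fz \<Gamma> \<sigma> \<theta> ys zs = 0"
proof -
  define A where "A = \<Gamma> + \<sigma> * q"
  have A: "A > 0" using assms by (simp add: A_def add_pos_nonneg)
  have Ay: "A * ys\<^sup>2 = \<sigma> * (\<theta> - c)" and Az: "A * zs = - (\<Gamma> * c + \<theta> * \<sigma> * q)"
    using A by (simp_all add: ys zs_def A_def)
  have "A * (- c - zs - q * ys\<^sup>2) = - c * A - A * zs - q * (A * ys\<^sup>2)"
    by (simp add: algebra_simps)
  also have "\<dots> = - c * A + (\<Gamma> * c + \<theta> * \<sigma> * q) - q * (\<sigma> * (\<theta> - c))"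
    unfolding Ay Az by simp
  also have "\<dots> = 0" by (simp add: A_def algebra_simps)
  finally have "- c - zs - q * ys\<^sup>2 = 0" using A by simp
  then show "fy c q ys zs 0 = 0"
    by (simp add: fy_def power2_eq_square power3_eq_cube algebra_simps)
  have "A * (\<Gamma> * ys\<^sup>2 - \<sigma> * zs - \<sigma> * \<theta>) = \<Gamma> * (A * ys\<^sup>2) - \<sigma> * (A * zs) - \<sigma> * \<theta> * A"
    by (simp add: algebra_simps)
  also have "\<dots> = \<Gamma> * (\<sigma> * (\<theta> - c)) + \<sigma> * (\<Gamma> * c + \<theta> * \<sigma> * q) - \<sigma> * \<theta> * A"
    unfolding Ay Az by (simp add: algebra_simps)
  also have "\<dots> = 0" by (simp add: A_def algebra_simps)
  finally show "fz \<Gamma> \<sigma> \<theta> ys zs = 0" using A by (simp add: fz_def)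
qed

lemma equilibrium_points:
  fixes c \<Gamma> \<sigma> q \<theta> ys :: real
  assumes "c > 0" "\<Gamma> > 0" "\<sigma> > 0" "q \<ge> 0" and "\<theta> > c"
    and ys: "ys \<in> {sqrt (\<sigma> * (\<theta> - c) / (\<Gamma> + \<sigma> * q)), - sqrt (\<sigma> * (\<theta> - c) / (\<Gamma> + \<sigma> * q))}"
  shows "let zs = - (\<Gamma> * c + \<theta> * \<sigma> * q) / (\<Gamma> + \<sigma> * q) in
    fy c q ys zs 0 = 0 \<and> fz \<Gamma> \<sigma> \<theta> ys zs = 0"
proof -
  have "\<sigma> * (\<theta> - c) / (\<Gamma> + \<sigma> * q) \<ge> 0"
    using assms by (simp add: add_pos_nonneg)
  then have "ys\<^sup>2 = \<sigma> * (\<theta> - c) / (\<Gamma> + \<sigma> * q)"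
    using ys by (auto simp del: real_sqrt_ge_0_iff)
  then show ?thesis unfolding Let_def using equilibria[OF assms(1-5)] by blast
qed

definition Linf_truncation :: "(real \<Rightarrow> real) \<Rightarrow> real \<Rightarrow> real" where
  "Linf_truncation d s = (if \<bar>d s\<bar> \<le> Linf_norm d then d s else 0)"

lemma abs_Linf_truncation_le: "Linf_pos d \<Longrightarrow> \<bar>Linf_truncation d s\<bar> \<le> Linf_norm d"
  using Linf_norm_essential_bound(1) by (simp add: Linf_truncation_def)

lemma Linf_truncation_integrable:
  "Linf_pos d \<Longrightarrow> Linf_truncation d absolutely_integrable_on {0..t}"
  unfolding Linf_pos_def Linf_truncation_def[abs_def]
  by (intro absolutely_integrable_on_truncation) simp

lemma is_solution_Linf_truncation_iff:
  "Linf_pos d \<Longrightarrow>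
    is_solution c \<Gamma> \<sigma> q \<theta> (Linf_truncation d) y z \<longleftrightarrow> is_solution c \<Gamma> \<sigma> q \<theta> d y z"
  by (rule is_solution_cong_negligible[OF Linf_norm_essential_bound(2)])
     (auto simp: Linf_truncation_def)

lemma Linf_solution_exists:
  assumes pos: "c > 0" "\<Gamma> > 0" "\<sigma> > 0" "q \<ge> 0" and d: "Linf_pos d"
  shows "\<exists>y z. y 0 = y0 \<and> z 0 = z0 \<and> is_solution c \<Gamma> \<sigma> q \<theta> d y z"
proof -
  obtain y z where "y 0 = y0" "z 0 = z0" "is_solution c \<Gamma> \<sigma> q \<theta> (Linf_truncation d) y z"
    using solution_exists[OF pos Linf_norm_essential_bound(1)[OF d]
        abs_Linf_truncation_le[OF d] Linf_truncation_integrable[OF d]]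
    by blast
  then show ?thesis using is_solution_Linf_truncation_iff[OF d] by blast
qed

lemma Linf_solution_bound:
  assumes pos: "c > 0" "\<Gamma> > 0" "\<sigma> > 0" "q \<ge> 0" and d: "Linf_pos d"
    and sol: "is_solution c \<Gamma> \<sigma> q \<theta> d y z" and t: "t \<ge> 0"
  shows "sqrt ((y t)\<^sup>2 + (z t)\<^sup>2) \<le>
    exp (- min c \<sigma> * t / 2) * sqrt (max \<Gamma> (1 / \<Gamma>)) * sqrt ((y 0)\<^sup>2 + (z 0)\<^sup>2)
    + sqrt (max \<Gamma> 1 / (c * min c \<sigma>)) * Linf_norm d
    + \<bar>\<theta>\<bar> * sqrt (\<sigma> / (min \<Gamma> 1 * min c \<sigma>))"
proof -
  have "is_solution c \<Gamma> \<sigma> q \<theta> (Linf_truncation d) y z"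
    using sol is_solution_Linf_truncation_iff[OF d] by simp
  then have "solves_upto c \<Gamma> \<sigma> q \<theta> (Linf_truncation d) y z t"
    using t unfolding is_solution_iff_solves_upto by simp
  then show ?thesis
    by (rule solves_upto_norm_bound[OF pos t Linf_norm_essential_bound(1)[OF d]
          abs_Linf_truncation_le[OF d] Linf_truncation_integrable[OF d]])
qed

theorem mainTheorem16:
  fixes c \<Gamma> \<sigma> q \<theta> :: real
  assumes "c > 0" "\<Gamma> > 0" "\<sigma> > 0" "q \<ge> 0"
  shows "(\<forall>y0 z0 d. Linf_pos d \<longrightarrow>
            (\<exists>y z. y 0 = y0 \<and> z 0 = z0 \<and> is_solution c \<Gamma> \<sigma> q \<theta> d y z) \<and>
            (\<forall>y z. y 0 = y0 \<and> z 0 = z0 \<and> is_solution c \<Gamma> \<sigma> q \<theta> d y z \<longrightarrow>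
               (\<forall>t\<ge>0. sqrt ((y t)\<^sup>2 + (z t)\<^sup>2) \<le>
                  exp (- min c \<sigma> * t / 2) * sqrt (max \<Gamma> (1 / \<Gamma>)) * sqrt (y0\<^sup>2 + z0\<^sup>2)
                  + sqrt (max \<Gamma> 1 / (c * min c \<sigma>)) * Linf_norm d
                  + \<bar>\<theta>\<bar> * sqrt (\<sigma> / (min \<Gamma> 1 * min c \<sigma>)))))
         \<and> (\<theta> > c \<longrightarrow>
            (\<forall>ys \<in> {sqrt (\<sigma> * (\<theta> - c) / (\<Gamma> + \<sigma> * q)), - sqrt (\<sigma> * (\<theta> - c) / (\<Gamma> + \<sigma> * q))}.
               let zs = - (\<Gamma> * c + \<theta> * \<sigma> * q) / (\<Gamma> + \<sigma> * q) in
               fy c q ys zs 0 = 0 \<and> fz \<Gamma> \<sigma> \<theta> ys zs = 0))"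
proof (intro conjI allI impI ballI)
  fix y0 z0 d assume "Linf_pos d"
  then show "\<exists>y z. y 0 = y0 \<and> z 0 = z0 \<and> is_solution c \<Gamma> \<sigma> q \<theta> d y z"
    by (rule Linf_solution_exists[OF assms])
next
  fix y0 z0 d y z and t :: real
  assume d: "Linf_pos d" and sol: "y 0 = y0 \<and> z 0 = z0 \<and> is_solution c \<Gamma> \<sigma> q \<theta> d y z"
    and t: "t \<ge> 0"
  then show "sqrt ((y t)\<^sup>2 + (z t)\<^sup>2) \<le>
      exp (- min c \<sigma> * t / 2) * sqrt (max \<Gamma> (1 / \<Gamma>)) * sqrt (y0\<^sup>2 + z0\<^sup>2)
      + sqrt (max \<Gamma> 1 / (c * min c \<sigma>)) * Linf_norm d
      + \<bar>\<theta>\<bar> * sqrt (\<sigma> / (min \<Gamma> 1 * min c \<sigma>))"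
    using Linf_solution_bound[OF assms d conjunct2[OF conjunct2[OF sol]] t] sol by simp
next
  fix ys assume "\<theta> > c"
    "ys \<in> {sqrt (\<sigma> * (\<theta> - c) / (\<Gamma> + \<sigma> * q)), - sqrt (\<sigma> * (\<theta> - c) / (\<Gamma> + \<sigma> * q))}"
  then show "let zs = - (\<Gamma> * c + \<theta> * \<sigma> * q) / (\<Gamma> + \<sigma> * q) in
      fy c q ys zs 0 = 0 \<and> fz \<Gamma> \<sigma> \<theta> ys zs = 0"
    by (rule equilibrium_points[OF assms])
qed

end
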